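(* Let $\alpha,\beta$ be fixed nonzero real numbers. There exist constants $C,N>0$, independent of $n$, $\epsilon$ and the point set, such that the following holds: for every $n>N$, every $\epsilon>0$, and every set $P\subset[0,1]^2$ of $n$ points satisfying the separation condition $$\min\{|p-q|:\ p,q\in P,\ p\neq q\}\ge \epsilon,$$ we have $$|\Pi_{\alpha,\beta}(P)|\le C\, n^{4/3}\,\epsilon^{-1}\log(\epsilon^{-1}).$$
   Context: For a finite set $P\subset\mathbb R^2$ and real numbers $\alpha,\beta$, define the set of ordered triples $$\Pi_{\alpha,\beta}(P)=\{(p,q,r)\in P\times P\times P:\ p\cdot q=\alpha \text{ and } p\cdot r=\beta\},$$ where $\cdot$ is the standard dot product on $\mathbb R^2$ (the points $p,q,r$ need not be distinct). Here $|p-q|$ is the Euclidean distance. *)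

theory Defs
  imports "HOL-Analysis.Analysis"
begin

definition Pi_ab :: "real \<Rightarrow> real \<Rightarrow> (real^2) set \<Rightarrow> ((real^2) \<times> (real^2) \<times> (real^2)) set" where
  "Pi_ab \<alpha> \<beta> P = {(p, q, r). p \<in> P \<and> q \<in> P \<and> r \<in> P \<and> p \<bullet> q = \<alpha> \<and> p \<bullet> r = \<beta>}"

definition unit_square :: "(real^2) set" where
  "unit_square = {x. \<forall>i. 0 \<le> x $ i \<and> x $ i \<le> 1}"

end

theory Submission
  imports Defs
begin

text \<open>For \<open>p \<in> P\<close> the points \<open>q\<close> with \<open>p \<bullet> q = \<alpha>\<close> lie on a line, and as \<open>\<alpha> \<noteq> 0\<close> distinct \<open>p\<close>
  give distinct lines; hence every pair of distinct points of \<open>P\<close> lies on at most one of these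
  lines. If such a line carries \<open>m\<close> points of the unit square, convexity of \<open>1/d\<^sup>2\<close> in the
  consecutive gaps gives \<open>m\<^sup>3 \<lesssim> \<Sum> 1/|x - y|\<^sup>2\<close> over pairs on the line. Summing over \<open>p\<close>,
  \<open>\<Sum>\<^sub>p m\<^sub>p\<^sup>3\<close> is bounded by the energy \<open>\<Sum>\<^sub>x\<^sub>\<noteq>\<^sub>y 1/|x - y|\<^sup>2\<close>, which for an \<open>\<epsilon>\<close>-separated set is
  \<open>O(n X\<^sup>2)\<close> with \<open>X = \<epsilon>\<^sup>-\<^sup>1 log \<epsilon>\<^sup>-\<^sup>1\<close>, by comparison with a grid of mesh \<open>\<epsilon>/2\<close>. H\<ouml>lder's
  inequality then gives \<open>|\<Pi>| = \<Sum>\<^sub>p m\<^sub>p(\<alpha>) m\<^sub>p(\<beta>) \<lesssim> n X\<^bsup>4/3\<^esup>\<close>, which is at most \<open>n\<^bsup>4/3\<^esup> X\<close>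
  when \<open>X \<le> n\<close>; otherwise the elementary bound \<open>|\<Pi>| \<le> 2n\<^sup>2\<close> suffices.\<close>

lemma inner_vec2: "(x::real^2) \<bullet> y = x$1 * y$1 + x$2 * y$2"
  by (simp add: inner_vec_def sum_2)

lemma norm_vec2_sq: "(norm (x::real^2))\<^sup>2 = (x$1)\<^sup>2 + (x$2)\<^sup>2"
  unfolding power2_norm_eq_inner by (simp add: inner_vec2 power2_eq_square)

lemma vec2_eq_iff: "(x::real^2) = y \<longleftrightarrow> x$1 = y$1 \<and> x$2 = y$2"
  by (simp add: vec_eq_iff forall_2)

lemma cross_vec2_sq_if_orthogonal:
  fixes p u :: "real^2"
  assumes "p \<bullet> u = 0"
  shows "(u$1 * p$2 - u$2 * p$1)\<^sup>2 = (norm u)\<^sup>2 * (norm p)\<^sup>2"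
proof -
  have "(u$1 * p$2 - u$2 * p$1)\<^sup>2 = ((u$1)\<^sup>2 + (u$2)\<^sup>2) * ((p$1)\<^sup>2 + (p$2)\<^sup>2) - (p \<bullet> u)\<^sup>2"
    by (simp add: inner_vec2 power2_eq_square algebra_simps)
  with assms show ?thesis by (simp add: norm_vec2_sq)
qed

definition dual_line :: "real \<Rightarrow> 'a::real_inner set \<Rightarrow> 'a \<Rightarrow> 'a set" where
  "dual_line \<alpha> P p = {q \<in> P. p \<bullet> q = \<alpha>}"

definition off_diag :: "'a set \<Rightarrow> ('a \<times> 'a) set" where
  "off_diag A = A \<times> A - Id"

lemma mem_off_diag [simp]: "(x, y) \<in> off_diag A \<longleftrightarrow> x \<in> A \<and> y \<in> A \<and> x \<noteq> y"
  by (auto simp: off_diag_def)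

lemma finite_off_diag: "finite A \<Longrightarrow> finite (off_diag A)"
  by (simp add: off_diag_def)

lemma off_diag_mono: "A \<subseteq> B \<Longrightarrow> off_diag A \<subseteq> off_diag B"
  by (auto simp: off_diag_def)

lemma card_Times_le_card_off_diag: "finite A \<Longrightarrow> card (A \<times> A) \<le> card (off_diag A) + card A"
proof -
  assume "finite A"
  have "A \<times> A \<subseteq> off_diag A \<union> (\<lambda>x. (x, x)) ` A" by auto
  hence "card (A \<times> A) \<le> card (off_diag A \<union> (\<lambda>x. (x, x)) ` A)"
    using \<open>finite A\<close> by (intro card_mono) (auto simp: finite_off_diag)
  also have "\<dots> \<le> card (off_diag A) + card ((\<lambda>x. (x, x)) ` A)" by (rule card_Un_le)
  also have "\<dots> \<le> card (off_diag A) + card A" using card_image_le[OF \<open>finite A\<close>] by simp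
  finally show ?thesis .
qed

lemma dual_line_unique:
  fixes p p' x y :: "real^2"
  assumes "\<alpha> \<noteq> 0" "p \<bullet> x = \<alpha>" "p \<bullet> y = \<alpha>" "p' \<bullet> x = \<alpha>" "p' \<bullet> y = \<alpha>" "x \<noteq> y"
  shows "p = p'"
proof (rule ccontr)
  assume "p \<noteq> p'"
  define u where "u = p - p'"
  have u: "u$1 \<noteq> 0 \<or> u$2 \<noteq> 0" using \<open>p \<noteq> p'\<close> by (auto simp: vec2_eq_iff u_def)
  have ux: "u$1 * x$1 + u$2 * x$2 = 0" and uy: "u$1 * y$1 + u$2 * y$2 = 0"
    using assms by (simp_all add: inner_vec2 u_def algebra_simps)
  have "u$i * (x$1 * y$2 - x$2 * y$1) = 0" if "i = 1 \<or> i = 2" for i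
  proof -
    have "u$1 * (x$1 * y$2 - x$2 * y$1) = (u$1 * x$1 + u$2 * x$2) * y$2 - (u$1 * y$1 + u$2 * y$2) * x$2"
      "u$2 * (x$1 * y$2 - x$2 * y$1) = (u$1 * y$1 + u$2 * y$2) * x$1 - (u$1 * x$1 + u$2 * x$2) * y$1"
      by (simp_all add: algebra_simps)
    with ux uy that show ?thesis by auto
  qed
  with u have cross: "x$1 * y$2 - x$2 * y$1 = 0" by auto
  have "(p \<bullet> x) * y$1 - (p \<bullet> y) * x$1 = - p$2 * (x$1 * y$2 - x$2 * y$1)"
    "(p \<bullet> x) * y$2 - (p \<bullet> y) * x$2 = p$1 * (x$1 * y$2 - x$2 * y$1)"
    by (simp_all add: inner_vec2 algebra_simps)
  with cross assms(1-3) have "y$1 = x$1" "y$2 = x$2"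
    by (simp_all add: right_diff_distrib[symmetric])
  with assms(6) show False by (simp add: vec2_eq_iff)
qed

lemma disjoint_family_off_diag_dual_line:
  fixes P :: "(real^2) set"
  assumes "\<alpha> \<noteq> 0"
  shows "disjoint_family (\<lambda>p. off_diag (dual_line \<alpha> P p))"
  unfolding disjoint_family_on_def
proof (intro ballI impI)
  fix p p' :: "real^2" assume "p \<noteq> p'"
  show "off_diag (dual_line \<alpha> P p) \<inter> off_diag (dual_line \<alpha> P p') = {}"
  proof (rule ccontr)
    assume "off_diag (dual_line \<alpha> P p) \<inter> off_diag (dual_line \<alpha> P p') \<noteq> {}"
    then obtain x y where "x \<in> dual_line \<alpha> P p" "y \<in> dual_line \<alpha> P p"
      "x \<in> dual_line \<alpha> P p'" "y \<in> dual_line \<alpha> P p'" "x \<noteq> y"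
      by auto
    then have "p \<bullet> x = \<alpha>" "p \<bullet> y = \<alpha>" "p' \<bullet> x = \<alpha>" "p' \<bullet> y = \<alpha>" "x \<noteq> y"
      by (simp_all add: dual_line_def)
    with dual_line_unique[OF assms] \<open>p \<noteq> p'\<close> show False by blast
  qed
qed

lemma tangent_inverse_square_le:
  fixes d g :: real
  assumes "d > 0" "g > 0"
  shows "3 / g\<^sup>2 - 2 * d / g^3 \<le> 1 / d\<^sup>2"
proof -
  have "g^3 - (3 * d\<^sup>2 * g - 2 * d^3) = (g - d)\<^sup>2 * (g + 2 * d)"
    by (simp add: algebra_simps power2_eq_square power3_eq_cube)
  also have "\<dots> \<ge> 0" using assms by simp
  finally have "3 * d\<^sup>2 * g - 2 * d^3 \<le> g^3" by simp
  have "3 / g\<^sup>2 - 2 * d / g^3 = (3 * d\<^sup>2 * g - 2 * d^3) / (d\<^sup>2 * g^3)"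
    using assms by (simp add: field_simps power2_eq_square power3_eq_cube)
  also have "\<dots> \<le> g^3 / (d\<^sup>2 * g^3)"
    using \<open>3 * d\<^sup>2 * g - 2 * d^3 \<le> g^3\<close> assms by (intro divide_right_mono) auto
  also have "\<dots> = 1 / d\<^sup>2" using assms by simp
  finally show ?thesis .
qed

text \<open>Peeling off the largest value adds one consecutive gap \<open>d\<close>, whose term \<open>1/d\<^sup>2\<close> is bounded
  below by the tangent line of \<open>1/d\<^sup>2\<close> at \<open>g\<close>; the linear terms telescope to the spread.\<close>

lemma inverse_square_gaps_tangent_bound:
  fixes f :: "'a \<Rightarrow> real"
  assumes "finite A" "card A = Suc n" "inj_on f A" "g > 0" "\<forall>x\<in>A. lo \<le> f x"
  shows "\<exists>E \<subseteq> off_diag A.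
    3 * real n / g\<^sup>2 - 2 * (Max (f ` A) - lo) / g^3 \<le> (\<Sum>(x, y)\<in>E. 1 / (f x - f y)\<^sup>2)"
  using assms
proof (induction n arbitrary: A)
  case 0
  then obtain a where A: "A = {a}" by (auto simp: card_Suc_eq)
  have "0 \<le> 2 * (f a - lo) / g^3" using 0 A by simp
  thus ?case using A by (intro exI[of _ "{}"]) auto
next
  case (Suc n)
  have fin: "finite (f ` A)" "f ` A \<noteq> {}" using Suc.prems by auto
  obtain z where z: "z \<in> A" "f z = Max (f ` A)" using Max_in[OF fin] by auto
  define A' where "A' = A - {z}"
  have A': "finite A'" "card A' = Suc n" "inj_on f A'" "\<forall>x\<in>A'. lo \<le> f x"
    using Suc.prems z by (auto simp: A'_def intro: inj_on_subset)
  obtain E where E: "E \<subseteq> off_diag A'"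
    "3 * real n / g\<^sup>2 - 2 * (Max (f ` A') - lo) / g^3 \<le> (\<Sum>(x, y)\<in>E. 1 / (f x - f y)\<^sup>2)"
    using Suc.IH[OF A'(1,2,3) Suc.prems(4) A'(4)] by blast
  have fin': "finite (f ` A')" "f ` A' \<noteq> {}" using A' by auto
  obtain w where w: "w \<in> A'" "f w = Max (f ` A')" using Max_in[OF fin'] by auto
  have "w \<in> A" "w \<noteq> z" using w by (auto simp: A'_def)
  hence "f w < f z"
    using z fin Suc.prems(3) by (metis Max_ge image_eqI inj_on_contraD order_le_neq_trans)
  have "(z, w) \<notin> E" using E(1) by (auto simp: A'_def)
  moreover have "finite E" using E(1) A'(1) finite_off_diag finite_subset by blast
  ultimately have sum_E: "(\<Sum>(x, y)\<in>insert (z, w) E. 1 / (f x - f y)\<^sup>2)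
      = 1 / (f z - f w)\<^sup>2 + (\<Sum>(x, y)\<in>E. 1 / (f x - f y)\<^sup>2)"
    by simp
  have tangent: "3 / g\<^sup>2 - 2 * (f z - f w) / g^3 \<le> 1 / (f z - f w)\<^sup>2"
    using tangent_inverse_square_le[of "f z - f w" g] \<open>f w < f z\<close> Suc.prems(4) by simp
  have "3 * real (Suc n) / g\<^sup>2 - 2 * (Max (f ` A) - lo) / g^3 =
     (3 * real n / g\<^sup>2 - 2 * (Max (f ` A') - lo) / g^3) + (3 / g\<^sup>2 - 2 * (f z - f w) / g^3)"
    using z w Suc.prems(4) by (simp add: field_simps)
  also have "\<dots> \<le> (\<Sum>(x, y)\<in>insert (z, w) E. 1 / (f x - f y)\<^sup>2)"
    using sum_E tangent E(2) by linarith
  finally show ?case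
    using E(1) \<open>w \<in> A\<close> \<open>w \<noteq> z\<close> z(1) off_diag_mono[of A' A]
    by (intro exI[of _ "insert (z, w) E"]) (auto simp: A'_def)
qed

lemma inverse_square_gaps_lower_bound:
  fixes f :: "'a \<Rightarrow> real"
  assumes "finite A" "card A \<ge> 2" "inj_on f A" "L > 0" "\<forall>x\<in>A. \<forall>y\<in>A. \<bar>f x - f y\<bar> \<le> L"
  shows "\<exists>E \<subseteq> off_diag A. (real (card A) - 1)^3 / L\<^sup>2 \<le> (\<Sum>(x, y)\<in>E. 1 / (f x - f y)\<^sup>2)"
proof -
  obtain n where n: "card A = Suc n" "n \<ge> 1" using assms(2) by (cases "card A") auto
  have fin: "finite (f ` A)" "f ` A \<noteq> {}" using assms(1) n by auto
  define lo where "lo = Min (f ` A)"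
  define g where "g = L / real n"
  have g: "g > 0" using n assms(4) by (simp add: g_def)
  have "\<forall>x\<in>A. lo \<le> f x" using fin by (simp add: lo_def)
  then obtain E where E: "E \<subseteq> off_diag A"
    "3 * real n / g\<^sup>2 - 2 * (Max (f ` A) - lo) / g^3 \<le> (\<Sum>(x, y)\<in>E. 1 / (f x - f y)\<^sup>2)"
    using inverse_square_gaps_tangent_bound[OF assms(1) n(1) assms(3) g] by blast
  obtain a b where "a \<in> A" "b \<in> A" "Max (f ` A) = f a" "lo = f b"
    using Max_in[OF fin] Min_in[OF fin] by (auto simp: lo_def)
  hence "Max (f ` A) - lo \<le> L" using assms(5) by fastforce
  hence "2 * (Max (f ` A) - lo) / g^3 \<le> 2 * L / g^3" using g by (simp add: divide_right_mono)
  moreover have "3 * real n / g\<^sup>2 - 2 * L / g^3 = (real (card A) - 1)^3 / L\<^sup>2"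
    using n assms(4) by (simp add: g_def field_simps power2_eq_square power3_eq_cube)
  ultimately show ?thesis using E by (intro exI[of _ E]) auto
qed

lemma inverse_square_dist_collinear_lower_bound:
  fixes A :: "(real^2) set" and p :: "real^2"
  assumes "finite A" "card A \<ge> 2" "p \<noteq> 0" "\<forall>x\<in>A. p \<bullet> x = \<alpha>"
    and "L > 0" "\<forall>x\<in>A. \<forall>y\<in>A. dist x y \<le> L"
  shows "\<exists>E \<subseteq> off_diag A. (real (card A) - 1)^3 / L\<^sup>2 \<le> (\<Sum>(x, y)\<in>E. 1 / (dist x y)\<^sup>2)"
proof -
  define f where "f x = (x$1 * p$2 - x$2 * p$1) / norm p" for x :: "real^2"
  have sq_isometry: "(f x - f y)\<^sup>2 = (dist x y)\<^sup>2" if "x \<in> A" "y \<in> A" for x y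
  proof -
    have "p \<bullet> (x - y) = 0" using assms(4) that by (simp add: inner_diff_right)
    hence "((x - y)$1 * p$2 - (x - y)$2 * p$1)\<^sup>2 = (norm (x - y))\<^sup>2 * (norm p)\<^sup>2"
      by (rule cross_vec2_sq_if_orthogonal)
    moreover have "f x - f y = ((x - y)$1 * p$2 - (x - y)$2 * p$1) / norm p"
      unfolding f_def diff_divide_distrib[symmetric] by (simp add: algebra_simps)
    ultimately show ?thesis using assms(3) by (simp add: power_divide dist_norm)
  qed
  have isometry: "\<bar>f x - f y\<bar> = dist x y" if "x \<in> A" "y \<in> A" for x y
    using arg_cong[OF sq_isometry[OF that], of sqrt] by simp
  have "inj_on f A"
  proof (rule inj_onI)
    fix x y assume "x \<in> A" "y \<in> A" "f x = f y"
    thus "x = y" using isometry[of x y] by simp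
  qed
  moreover have "\<forall>x\<in>A. \<forall>y\<in>A. \<bar>f x - f y\<bar> \<le> L" using isometry assms(6) by simp
  ultimately obtain E where E: "E \<subseteq> off_diag A"
    "(real (card A) - 1)^3 / L\<^sup>2 \<le> (\<Sum>(x, y)\<in>E. 1 / (f x - f y)\<^sup>2)"
    using inverse_square_gaps_lower_bound[OF assms(1,2) _ assms(5)] by blast
  have "(\<Sum>(x, y)\<in>E. 1 / (f x - f y)\<^sup>2) = (\<Sum>(x, y)\<in>E. 1 / (dist x y)\<^sup>2)"
    using E(1) sq_isometry by (intro sum.cong) auto
  with E show ?thesis by auto
qed

lemma dist_le_sqrt2_if_unit_square:
  assumes "x \<in> unit_square" "y \<in> unit_square"
  shows "dist x y \<le> sqrt 2"
proof -
  have "\<bar>x$i - y$i\<bar> \<le> 1" for i using assms by (auto simp: unit_square_def abs_le_iff) (smt (verit))+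
  hence "(x$i - y$i)\<^sup>2 \<le> 1" for i by (simp add: abs_square_le_1)
  from this[of 1] this[of 2] have "(x$1 - y$1)\<^sup>2 + (x$2 - y$2)\<^sup>2 \<le> 2" by linarith
  hence "(dist x y)\<^sup>2 \<le> 2" by (simp add: dist_norm norm_vec2_sq)
  thus ?thesis by (rule real_le_rsqrt)
qed

lemma cube_card_collinear_le:
  fixes A :: "(real^2) set"
  assumes "finite A" "A \<subseteq> unit_square" "\<forall>x\<in>A. p \<bullet> x = \<alpha>" "\<alpha> \<noteq> 0"
  shows "real (card A)^3 \<le> 1 + 16 * (\<Sum>(x, y)\<in>off_diag A. 1 / (dist x y)\<^sup>2)"
proof (cases "card A \<ge> 2")
  case True
  then obtain x where "x \<in> A" by fastforce
  with assms(3,4) have "p \<noteq> 0" by auto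
  have "\<forall>x\<in>A. \<forall>y\<in>A. dist x y \<le> sqrt 2" using assms(2) dist_le_sqrt2_if_unit_square by blast
  then obtain E where E: "E \<subseteq> off_diag A"
    "(real (card A) - 1)^3 / 2 \<le> (\<Sum>(x, y)\<in>E. 1 / (dist x y)\<^sup>2)"
    using inverse_square_dist_collinear_lower_bound[OF assms(1) True \<open>p \<noteq> 0\<close> assms(3), of "sqrt 2"]
    by auto
  have "real (card A)^3 \<le> (2 * (real (card A) - 1))^3"
    using True by (intro power_mono) auto
  also have "\<dots> = 16 * ((real (card A) - 1)^3 / 2)" by (subst power_mult_distrib) simp
  also have "\<dots> \<le> 16 * (\<Sum>(x, y)\<in>off_diag A. 1 / (dist x y)\<^sup>2)"
    using E assms(1) by (intro mult_left_mono order.trans[OF E(2)] sum_mono2) (auto simp: finite_off_diag)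
  finally show ?thesis by simp
next
  case False
  hence "real (card A)^3 \<le> 1" by (simp add: power_le_one)
  moreover have "0 \<le> (\<Sum>(x, y)\<in>off_diag A. 1 / (dist x y)\<^sup>2)" by (auto intro: sum_nonneg)
  ultimately show ?thesis by linarith
qed

lemma sum_cube_card_dual_line_le:
  fixes P :: "(real^2) set"
  assumes "finite P" "P \<subseteq> unit_square" "\<alpha> \<noteq> 0"
  shows "(\<Sum>p\<in>P. real (card (dual_line \<alpha> P p))^3)
    \<le> real (card P) + 16 * (\<Sum>(x, y)\<in>off_diag P. 1 / (dist x y)\<^sup>2)"
proof -
  let ?D = "\<lambda>p. off_diag (dual_line \<alpha> P p)"
  let ?e = "\<lambda>(x, y). 1 / (dist x y)\<^sup>2"
  have fin: "finite (dual_line \<alpha> P p)" for p using assms(1) by (simp add: dual_line_def)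
  have "(\<Sum>p\<in>P. real (card (dual_line \<alpha> P p))^3) \<le> (\<Sum>p\<in>P. 1 + 16 * sum ?e (?D p))"
    using assms by (intro sum_mono cube_card_collinear_le fin) (auto simp: dual_line_def)
  also have "\<dots> = real (card P) + 16 * (\<Sum>p\<in>P. sum ?e (?D p))"
    by (simp add: sum.distrib sum_distrib_left)
  also have "(\<Sum>p\<in>P. sum ?e (?D p)) = sum ?e (\<Union>p\<in>P. ?D p)"
    using disjoint_family_off_diag_dual_line[OF assms(3)] assms(1) fin
    by (intro sum.UNION_disjoint_family[symmetric]) (auto simp: finite_off_diag intro: disjoint_family_on_mono)
  also have "\<dots> \<le> sum ?e (off_diag P)"
    using assms(1) by (intro sum_mono2) (auto simp: finite_off_diag dual_line_def off_diag_def)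
  finally show ?thesis by simp
qed

text \<open>Cells of side \<open>1/(2t)\<close> have diameter below \<open>1/t\<close>, so a \<open>1/t\<close>-separated set meets each cell
  at most once, and the cell offset of \<open>y\<close> from \<open>x\<close> controls \<open>1/dist x y\<close>.\<close>

definition grid_cell :: "real \<Rightarrow> real^2 \<Rightarrow> int \<times> int" where
  "grid_cell t y = (\<lfloor>2 * t * y$1\<rfloor>, \<lfloor>2 * t * y$2\<rfloor>)"

definition grid_weight :: "int \<times> int \<Rightarrow> real" where
  "grid_weight v = 1 / ((\<bar>of_int (fst v)\<bar> + 1) * (\<bar>of_int (snd v)\<bar> + 1))"

lemma abs_floor_diff_less: "\<bar>real_of_int (\<lfloor>a\<rfloor> - \<lfloor>b\<rfloor>)\<bar> < \<bar>a - b\<bar> + 1"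
  using floor_correct[of a] floor_correct[of b] by linarith

lemma abs_diff_less_one_if_floor_eq: "\<lfloor>a\<rfloor> = \<lfloor>b\<rfloor> \<Longrightarrow> \<bar>a - b\<bar> < (1::real)"
  using floor_correct[of a] floor_correct[of b] by linarith

lemma grid_cell_in_box:
  assumes "t > 0" "y \<in> unit_square"
  shows "grid_cell t y \<in> {0..\<lfloor>2 * t\<rfloor>} \<times> {0..\<lfloor>2 * t\<rfloor>}"
proof -
  have "0 \<le> y$i" "y$i \<le> 1" for i using assms(2) by (auto simp: unit_square_def)
  hence "0 \<le> 2 * t * y$i" "2 * t * y$i \<le> 2 * t" for i using assms(1) by (simp_all add: mult_left_le)
  hence "0 \<le> \<lfloor>2 * t * y$i\<rfloor>" "\<lfloor>2 * t * y$i\<rfloor> \<le> \<lfloor>2 * t\<rfloor>" for i by (simp_all add: floor_mono)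
  thus ?thesis by (simp add: grid_cell_def)
qed

lemma inj_on_grid_cell:
  assumes "t > 0" "\<forall>p\<in>P. \<forall>q\<in>P. p \<noteq> q \<longrightarrow> dist p q \<ge> 1 / t"
  shows "inj_on (grid_cell t) P"
proof (rule inj_onI, rule ccontr)
  fix x y assume xy: "x \<in> P" "y \<in> P" "grid_cell t x = grid_cell t y" "x \<noteq> y"
  have close: "\<bar>x$i - y$i\<bar> < 1 / (2 * t)" if "\<lfloor>2 * t * x$i\<rfloor> = \<lfloor>2 * t * y$i\<rfloor>" for i
  proof -
    have "\<bar>2 * t * x$i - 2 * t * y$i\<bar> < 1" using that by (rule abs_diff_less_one_if_floor_eq)
    hence "2 * t * \<bar>x$i - y$i\<bar> < 1" using assms(1) by (simp add: abs_mult flip: right_diff_distrib)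
    thus ?thesis using assms(1) by (simp add: field_simps)
  qed
  have "dist x y \<le> \<bar>x$1 - y$1\<bar> + \<bar>x$2 - y$2\<bar>"
    using norm_le_l1_cart[of "x - y"] by (simp add: dist_norm sum_2)
  also have "\<dots> < 1 / (2 * t) + 1 / (2 * t)"
    using xy(3) by (intro add_strict_mono close) (simp_all add: grid_cell_def)
  finally have "dist x y < 1 / t" by simp
  with assms(2) xy show False by fastforce
qed

lemma card_le_if_separated:
  assumes "t > 0" "finite P" "P \<subseteq> unit_square" "\<forall>p\<in>P. \<forall>q\<in>P. p \<noteq> q \<longrightarrow> dist p q \<ge> 1 / t"
  shows "real (card P) \<le> (2 * t + 1)\<^sup>2"
proof -
  let ?box = "{0..\<lfloor>2 * t\<rfloor>} \<times> {0..\<lfloor>2 * t\<rfloor>}"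
  have "card P = card (grid_cell t ` P)" using inj_on_grid_cell[OF assms(1,4)] by (simp add: card_image)
  also have "\<dots> \<le> card ?box"
  proof (rule card_mono)
    show "grid_cell t ` P \<subseteq> ?box" using grid_cell_in_box[OF assms(1)] assms(3) by blast
  qed simp
  finally have "real (card P) \<le> real (card ?box)" by linarith
  also have "\<dots> = (real_of_int \<lfloor>2 * t\<rfloor> + 1)\<^sup>2"
    using \<open>t > 0\<close> by (simp add: card_cartesian_product power2_eq_square)
  also have "\<dots> \<le> (2 * t + 1)\<^sup>2" using assms(1) by (intro power_mono) auto
  finally show ?thesis .
qed

lemma inverse_sq_dist_le_grid_weight:
  assumes "t > 0" "1 / t \<le> dist x y"
  shows "1 / (dist x y)\<^sup>2 \<le> 16 * t\<^sup>2 * grid_weight (grid_cell t y - grid_cell t x)"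
proof -
  define d where "d = dist x y"
  have "d > 0" "1 \<le> t * d" using assms by (auto simp: d_def field_simps)
  have offset: "\<bar>real_of_int (\<lfloor>2 * t * y$i\<rfloor> - \<lfloor>2 * t * x$i\<rfloor>)\<bar> + 1 \<le> 4 * t * d" for i
  proof -
    have "\<bar>2 * t * y$i - 2 * t * x$i\<bar> = 2 * t * dist (y$i) (x$i)"
      using assms(1) by (simp add: dist_real_def abs_mult flip: right_diff_distrib)
    also have "\<dots> \<le> 2 * t * d"
      using assms(1) dist_vec_nth_le[of y i x] by (simp add: d_def dist_commute)
    finally show ?thesis using abs_floor_diff_less[of "2 * t * y$i" "2 * t * x$i"] \<open>1 \<le> t * d\<close> by linarith
  qed
  define w where "w = (\<bar>real_of_int (\<lfloor>2 * t * y$1\<rfloor> - \<lfloor>2 * t * x$1\<rfloor>)\<bar> + 1)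
    * (\<bar>real_of_int (\<lfloor>2 * t * y$2\<rfloor> - \<lfloor>2 * t * x$2\<rfloor>)\<bar> + 1)"
  have "0 < w" by (simp add: w_def add_pos_nonneg)
  have "w \<le> (4 * t * d) * (4 * t * d)"
    unfolding w_def using offset \<open>d > 0\<close> assms(1) by (intro mult_mono) auto
  hence "16 * t\<^sup>2 / (16 * t\<^sup>2 * d\<^sup>2) \<le> 16 * t\<^sup>2 / w"
    using \<open>0 < w\<close> \<open>d > 0\<close> assms(1) by (intro divide_left_mono) (simp_all add: power2_eq_square algebra_simps)
  moreover have "16 * t\<^sup>2 / (16 * t\<^sup>2 * d\<^sup>2) = 1 / d\<^sup>2" using assms(1) by simp
  ultimately show ?thesis by (simp add: d_def w_def grid_weight_def grid_cell_def)
qed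

lemma sum_inverse_abs_plus_one_le_ln:
  "(\<Sum>a\<in>{-int H..int H}. 1 / (real_of_int \<bar>a\<bar> + 1)) \<le> 1 + 2 * ln (real H + 1)"
proof (induction H)
  case 0
  show ?case by simp
next
  case (Suc H)
  have "{-int (Suc H)..int (Suc H)} = {-int (Suc H), int (Suc H)} \<union> {-int H..int H}" by auto
  hence "(\<Sum>a\<in>{-int (Suc H)..int (Suc H)}. 1 / (real_of_int \<bar>a\<bar> + 1))
      = 2 / (real H + 2) + (\<Sum>a\<in>{-int H..int H}. 1 / (real_of_int \<bar>a\<bar> + 1))"
    by (simp add: sum.union_disjoint)
  moreover have "1 / (real H + 2) \<le> ln (real H + 2) - ln (real H + 1)"
  proof -
    have "ln ((real H + 1) / (real H + 2)) \<le> (real H + 1) / (real H + 2) - 1"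
      by (rule ln_le_minus_one) simp
    also have "\<dots> = - (1 / (real H + 2))" by (simp add: field_simps)
    finally show ?thesis by (simp add: ln_div)
  qed
  moreover have "ln (real (Suc H) + 1) = ln (real H + 2)" by (simp add: add.assoc)
  ultimately show ?case using Suc.IH by linarith
qed

lemma sum_inverse_sq_dist_from_point_le:
  assumes "t > 0" "finite P" "P \<subseteq> unit_square"
    and sep: "\<forall>p\<in>P. \<forall>q\<in>P. p \<noteq> q \<longrightarrow> dist p q \<ge> 1 / t" and "x \<in> P"
  shows "(\<Sum>y\<in>P - {x}. 1 / (dist x y)\<^sup>2)
    \<le> 16 * t\<^sup>2 * (\<Sum>a\<in>{-\<lfloor>2 * t\<rfloor>..\<lfloor>2 * t\<rfloor>}. 1 / (real_of_int \<bar>a\<bar> + 1))\<^sup>2"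
proof -
  define H where "H = \<lfloor>2 * t\<rfloor>"
  define offset where "offset y = grid_cell t y - grid_cell t x" for y
  have inj: "inj_on offset (P - {x})"
    using inj_on_grid_cell[OF assms(1) sep] by (auto simp: offset_def inj_on_def)
  have box: "offset ` (P - {x}) \<subseteq> {-H..H} \<times> {-H..H}"
  proof
    fix v assume "v \<in> offset ` (P - {x})"
    then obtain y where "y \<in> P" "v = offset y" by auto
    moreover have "grid_cell t y \<in> {0..H} \<times> {0..H}" "grid_cell t x \<in> {0..H} \<times> {0..H}"
      using grid_cell_in_box[OF assms(1)] assms(3,5) \<open>y \<in> P\<close> by (auto simp: H_def)
    ultimately show "v \<in> {-H..H} \<times> {-H..H}" by (auto simp: offset_def mem_Times_iff)
  qed
  have "(\<Sum>y\<in>P - {x}. 1 / (dist x y)\<^sup>2) \<le> (\<Sum>y\<in>P - {x}. 16 * t\<^sup>2 * grid_weight (offset y))"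
    using sep assms(5) unfolding offset_def
    by (intro sum_mono inverse_sq_dist_le_grid_weight[OF assms(1)]) auto
  also have "\<dots> = 16 * t\<^sup>2 * (\<Sum>v\<in>offset ` (P - {x}). grid_weight v)"
    by (simp add: sum_distrib_left sum.reindex[OF inj])
  also have "\<dots> \<le> 16 * t\<^sup>2 * (\<Sum>v\<in>{-H..H} \<times> {-H..H}. grid_weight v)"
    using box by (intro mult_left_mono sum_mono2) (auto simp: grid_weight_def)
  also have "(\<Sum>v\<in>{-H..H} \<times> {-H..H}. grid_weight v)
      = (\<Sum>a\<in>{-H..H}. 1 / (real_of_int \<bar>a\<bar> + 1))\<^sup>2"
    by (simp add: grid_weight_def sum_product sum.cartesian_product split_def power2_eq_square)
  finally show ?thesis by (simp add: H_def)
qed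

lemma sum_inverse_sq_dist_off_diag_le:
  assumes "t > 0" "finite P" "P \<subseteq> unit_square"
    and sep: "\<forall>p\<in>P. \<forall>q\<in>P. p \<noteq> q \<longrightarrow> dist p q \<ge> 1 / t"
  shows "(\<Sum>(x, y)\<in>off_diag P. 1 / (dist x y)\<^sup>2) \<le> real (card P) * (16 * t\<^sup>2 * (1 + 2 * ln (2 * t + 1))\<^sup>2)"
proof -
  define B where "B = (\<Sum>a\<in>{-\<lfloor>2 * t\<rfloor>..\<lfloor>2 * t\<rfloor>}. 1 / (real_of_int \<bar>a\<bar> + 1))"
  have "B \<le> 1 + 2 * ln (real (nat \<lfloor>2 * t\<rfloor>) + 1)"
    using sum_inverse_abs_plus_one_le_ln[of "nat \<lfloor>2 * t\<rfloor>"] assms(1) by (simp add: B_def)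
  also have "\<dots> \<le> 1 + 2 * ln (2 * t + 1)"
    using assms(1) of_int_floor_le[of "2 * t"] by (simp add: ln_le_cancel_iff add_nonneg_pos)
  finally have "B\<^sup>2 \<le> (1 + 2 * ln (2 * t + 1))\<^sup>2"
    by (intro power_mono) (auto simp: B_def intro!: sum_nonneg)
  have "off_diag P = (SIGMA x:P. P - {x})" by auto
  hence "(\<Sum>(x, y)\<in>off_diag P. 1 / (dist x y)\<^sup>2) = (\<Sum>x\<in>P. \<Sum>y\<in>P - {x}. 1 / (dist x y)\<^sup>2)"
    using assms(2) by (simp add: sum.Sigma)
  also have "\<dots> \<le> (\<Sum>x\<in>P. 16 * t\<^sup>2 * B\<^sup>2)"
    using sum_inverse_sq_dist_from_point_le[OF assms] by (intro sum_mono) (simp add: B_def)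
  also have "\<dots> \<le> real (card P) * (16 * t\<^sup>2 * (1 + 2 * ln (2 * t + 1))\<^sup>2)"
    using \<open>B\<^sup>2 \<le> _\<close> by (simp add: mult_left_mono)
  finally show ?thesis .
qed

lemma one_le_ln_if_three_le: "3 \<le> (t::real) \<Longrightarrow> 1 \<le> ln t"
  using exp_le ln_ge_iff[of t 1] by simp

lemma sum_cube_card_dual_line_bound:
  fixes P :: "(real^2) set"
  assumes "t \<ge> 3" "finite P" "P \<subseteq> unit_square" "\<alpha> \<noteq> 0"
    and sep: "\<forall>p\<in>P. \<forall>q\<in>P. p \<noteq> q \<longrightarrow> dist p q \<ge> 1 / t"
  shows "(\<Sum>p\<in>P. real (card (dual_line \<alpha> P p))^3) \<le> 12545 * real (card P) * (t * ln t)\<^sup>2"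
proof -
  have "t > 0" using assms(1) by simp
  have "ln t \<ge> 1" using one_le_ln_if_three_le[OF assms(1)] .
  have "ln (2 * t + 1) \<le> ln (3 * t)" using assms(1) by simp
  also have "\<dots> = ln 3 + ln t" using \<open>t > 0\<close> by (simp add: ln_mult)
  finally have "ln (2 * t + 1) \<le> ln 3 + ln t" .
  moreover have "ln 3 \<le> (2::real)" using ln_le_minus_one[of 3] by simp
  moreover have "0 \<le> ln (2 * t + 1)" using assms(1) by simp
  ultimately have "(1 + 2 * ln (2 * t + 1))\<^sup>2 \<le> (7 * ln t)\<^sup>2"
    using \<open>ln t \<ge> 1\<close> by (intro power_mono) auto
  have "(\<Sum>(x, y)\<in>off_diag P. 1 / (dist x y)\<^sup>2) \<le> real (card P) * (16 * t\<^sup>2 * (1 + 2 * ln (2 * t + 1))\<^sup>2)"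
    by (rule sum_inverse_sq_dist_off_diag_le[OF \<open>t > 0\<close> assms(2,3) sep])
  also have "\<dots> \<le> real (card P) * (16 * t\<^sup>2 * (7 * ln t)\<^sup>2)"
    using \<open>(1 + 2 * ln (2 * t + 1))\<^sup>2 \<le> _\<close> by (intro mult_left_mono) auto
  also have "\<dots> = real (card P) * (784 * (t * ln t)\<^sup>2)" by (simp add: power_mult_distrib)
  finally have energy: "(\<Sum>(x, y)\<in>off_diag P. 1 / (dist x y)\<^sup>2) \<le> real (card P) * (784 * (t * ln t)\<^sup>2)" .
  have "1 \<le> (t * ln t)\<^sup>2" using assms(1) \<open>ln t \<ge> 1\<close> by (simp add: one_le_power mult_ge1_I)
  hence "real (card P) \<le> real (card P) * (t * ln t)\<^sup>2" by (simp add: mult_le_cancel_left1)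
  with energy sum_cube_card_dual_line_le[OF assms(2,3,4)] show ?thesis by linarith
qed

lemma card_Pi_ab_eq_sum:
  assumes "finite P"
  shows "card (Pi_ab \<alpha> \<beta> P) = (\<Sum>p\<in>P. card (dual_line \<alpha> P p) * card (dual_line \<beta> P p))"
proof -
  have "Pi_ab \<alpha> \<beta> P = (SIGMA p:P. dual_line \<alpha> P p \<times> dual_line \<beta> P p)"
    by (auto simp: Pi_ab_def dual_line_def)
  thus ?thesis using assms by (simp add: card_cartesian_product dual_line_def)
qed

lemma sum_sq_card_dual_line_le:
  fixes P :: "(real^2) set"
  assumes "finite P" "\<alpha> \<noteq> 0"
  shows "(\<Sum>p\<in>P. card (dual_line \<alpha> P p) ^ 2) \<le> 2 * card P ^ 2"
proof -
  let ?D = "\<lambda>p. off_diag (dual_line \<alpha> P p)"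
  have fin: "finite (dual_line \<alpha> P p)" for p using assms(1) by (simp add: dual_line_def)
  have "(\<Sum>p\<in>P. card (dual_line \<alpha> P p) ^ 2) \<le> (\<Sum>p\<in>P. card (?D p) + card (dual_line \<alpha> P p))"
    using card_Times_le_card_off_diag[OF fin]
    by (intro sum_mono) (simp add: card_cartesian_product power2_eq_square)
  also have "\<dots> = card (\<Union>p\<in>P. ?D p) + (\<Sum>p\<in>P. card (dual_line \<alpha> P p))"
  proof -
    have "disjoint_family_on ?D P"
      using disjoint_family_off_diag_dual_line[OF assms(2)] by (rule disjoint_family_on_mono[rotated]) simp
    thus ?thesis using assms(1) by (simp add: sum.distrib card_UN_disjoint' finite_off_diag fin)
  qed
  also have "card (\<Union>p\<in>P. ?D p) \<le> card (P \<times> P)"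
    using assms(1) by (intro card_mono) (auto simp: off_diag_def dual_line_def)
  also have "(\<Sum>p\<in>P. card (dual_line \<alpha> P p)) \<le> (\<Sum>p\<in>P. card P)"
    using assms(1) by (intro sum_mono card_mono) (auto simp: dual_line_def)
  finally show ?thesis by (simp add: card_cartesian_product power2_eq_square)
qed

lemma card_Pi_ab_le_sq:
  fixes P :: "(real^2) set"
  assumes "finite P" "\<alpha> \<noteq> 0" "\<beta> \<noteq> 0"
  shows "real (card (Pi_ab \<alpha> \<beta> P)) \<le> 2 * (real (card P))\<^sup>2"
proof -
  let ?a = "\<lambda>p. real (card (dual_line \<alpha> P p))" and ?b = "\<lambda>p. real (card (dual_line \<beta> P p))"
  have "real (card (Pi_ab \<alpha> \<beta> P)) = (\<Sum>p\<in>P. ?a p * ?b p)"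
    by (simp add: card_Pi_ab_eq_sum[OF assms(1)])
  also have "\<dots> \<le> (\<Sum>p\<in>P. ((?a p)\<^sup>2 + (?b p)\<^sup>2) / 2)"
  proof (rule sum_mono)
    fix p show "?a p * ?b p \<le> ((?a p)\<^sup>2 + (?b p)\<^sup>2) / 2" using sum_squares_bound[of "?a p" "?b p"] by simp
  qed
  also have "\<dots> = (real (\<Sum>p\<in>P. card (dual_line \<alpha> P p) ^ 2) + real (\<Sum>p\<in>P. card (dual_line \<beta> P p) ^ 2)) / 2"
    by (simp add: sum.distrib sum_divide_distrib add_divide_distrib)
  also have "\<dots> \<le> (real (2 * card P ^ 2) + real (2 * card P ^ 2)) / 2"
    using sum_sq_card_dual_line_le[OF assms(1,2)] sum_sq_card_dual_line_le[OF assms(1,3)]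
    by (intro divide_right_mono add_mono) (simp_all only: of_nat_le_iff)
  finally show ?thesis by simp
qed

lemma mult_le_sq_plus_cubes:
  fixes a b K :: real
  assumes "a \<ge> 0" "b \<ge> 0" "K > 0"
  shows "a * b \<le> K\<^sup>2 + (a^3 + b^3) / (2 * K)"
proof -
  have sq_le: "x\<^sup>2 \<le> K\<^sup>2 + x^3 / K" if "x \<ge> 0" for x :: real
  proof (cases "x \<le> K")
    case True
    hence "x\<^sup>2 \<le> K\<^sup>2" using that by (intro power_mono) auto
    moreover have "x^3 / K \<ge> 0" using that assms(3) by simp
    ultimately show ?thesis by linarith
  next
    case False
    hence "x\<^sup>2 * K \<le> x\<^sup>2 * x" using assms(3) by (intro mult_left_mono) auto
    hence "x\<^sup>2 \<le> x^3 / K" using assms(3) by (simp add: field_simps power2_eq_square power3_eq_cube)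
    with zero_le_power2[of K] show ?thesis by linarith
  qed
  have "a * b \<le> (a\<^sup>2 + b\<^sup>2) / 2" using sum_squares_bound[of a b] by simp
  also have "\<dots> \<le> (2 * K\<^sup>2 + a^3 / K + b^3 / K) / 2"
  proof (rule divide_right_mono)
    show "a\<^sup>2 + b\<^sup>2 \<le> 2 * K\<^sup>2 + a^3 / K + b^3 / K" using sq_le[OF assms(1)] sq_le[OF assms(2)] by linarith
  qed simp
  also have "\<dots> = K\<^sup>2 + (a^3 + b^3) / (2 * K)" using assms(3) by (simp add: field_simps)
  finally show ?thesis .
qed

text \<open>H\<ouml>lder's inequality in the form \<open>\<Sum>ab \<le> nK\<^sup>2 + (\<Sum>a\<^sup>3 + \<Sum>b\<^sup>3)/(2K)\<close>, with \<open>K = X\<^bsup>2/3\<^esup>\<close>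
  balancing the two terms.\<close>

lemma card_Pi_ab_le_powr:
  fixes P :: "(real^2) set"
  assumes "t \<ge> 3" "finite P" "P \<subseteq> unit_square" "\<alpha> \<noteq> 0" "\<beta> \<noteq> 0"
    and sep: "\<forall>p\<in>P. \<forall>q\<in>P. p \<noteq> q \<longrightarrow> dist p q \<ge> 1 / t"
  shows "real (card (Pi_ab \<alpha> \<beta> P)) \<le> 12546 * real (card P) * (t * ln t) powr (4/3)"
proof -
  define X where "X = t * ln t"
  define K where "K = X powr (2/3)"
  have "ln t > 0" using assms(1) by simp
  hence "X > 0" using assms(1) by (simp add: X_def)
  hence "K > 0" by (simp add: K_def)
  have K_sq: "K\<^sup>2 = X powr (4/3)"
    using powr_add[of X "2/3" "2/3"] by (simp add: K_def power2_eq_square)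
  have "X\<^sup>2 = X powr 2" using \<open>X > 0\<close> by (simp add: powr_numeral)
  hence X_sq_div_K: "X\<^sup>2 / K = X powr (4/3)"
    using powr_diff[of X 2 "2/3"] by (simp add: K_def)
  let ?a = "\<lambda>p. real (card (dual_line \<alpha> P p))" and ?b = "\<lambda>p. real (card (dual_line \<beta> P p))"
  have "real (card (Pi_ab \<alpha> \<beta> P)) = (\<Sum>p\<in>P. ?a p * ?b p)"
    by (simp add: card_Pi_ab_eq_sum[OF assms(2)])
  also have "\<dots> \<le> (\<Sum>p\<in>P. K\<^sup>2 + (?a p ^ 3 + ?b p ^ 3) / (2 * K))"
    using \<open>K > 0\<close> by (intro sum_mono mult_le_sq_plus_cubes) auto
  also have "\<dots> = real (card P) * K\<^sup>2 + ((\<Sum>p\<in>P. ?a p ^ 3) + (\<Sum>p\<in>P. ?b p ^ 3)) / (2 * K)"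
    by (simp add: sum.distrib flip: sum_divide_distrib)
  also have "\<dots> \<le> real (card P) * K\<^sup>2 + (12545 * real (card P) * X\<^sup>2 + 12545 * real (card P) * X\<^sup>2) / (2 * K)"
    using sum_cube_card_dual_line_bound[OF assms(1,2,3,4) sep] sum_cube_card_dual_line_bound[OF assms(1,2,3,5) sep]
      \<open>K > 0\<close> unfolding X_def by (intro add_left_mono divide_right_mono add_mono) auto
  also have "\<dots> = real (card P) * K\<^sup>2 + 12545 * real (card P) * (X\<^sup>2 / K)"
    using \<open>K > 0\<close> by (simp add: field_simps)
  also have "\<dots> = 12546 * real (card P) * X powr (4/3)" by (simp add: K_sq X_sq_div_K)
  finally show ?thesis by (simp add: X_def)
qed

lemma powr_four_thirds_eq: "x > 0 \<Longrightarrow> x powr (4/3) = x * x powr (1/3)" for x :: real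
  using powr_add[of x 1 "1/3"] by simp

lemma min_le_mult_powr_four_thirds:
  fixes n X c :: real
  assumes "n \<ge> 1" "X \<ge> 1" "c \<ge> 2"
  shows "min (c * n * X powr (4/3)) (2 * n\<^sup>2) \<le> c * n powr (4/3) * X"
proof (cases "X \<le> n")
  case True
  have "c * n * X powr (4/3) = c * n * X powr (1/3) * X" using assms(2) by (simp add: powr_four_thirds_eq)
  also have "\<dots> \<le> c * n * n powr (1/3) * X" using True assms by (intro mult_right_mono mult_left_mono powr_mono2) auto
  also have "\<dots> = c * n powr (4/3) * X" using assms(1) by (simp add: powr_four_thirds_eq)
  finally show ?thesis by simp
next
  case False
  have "n\<^sup>2 = n powr 2" using assms(1) by (simp add: powr_numeral)
  also have "\<dots> = n powr (4/3) * n powr (2/3)" using powr_add[of n "4/3" "2/3"] by simp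
  also have "\<dots> \<le> n powr (4/3) * n" using assms(1) powr_mono[of "2/3" 1 n] by (intro mult_left_mono) auto
  also have "\<dots> \<le> n powr (4/3) * X" using False by (intro mult_left_mono) auto
  finally have "2 * n\<^sup>2 \<le> 2 * (n powr (4/3) * X)" by simp
  also have "\<dots> \<le> c * (n powr (4/3) * X)" using assms by (intro mult_right_mono) auto
  finally show ?thesis by (simp add: mult.assoc)
qed

theorem theorem2:
  fixes \<alpha> \<beta> :: real
  assumes "\<alpha> \<noteq> 0" and "\<beta> \<noteq> 0"
  shows "\<exists>C N. C > 0 \<and> N > 0 \<and>
    (\<forall>(n::nat) (\<epsilon>::real) (P::(real^2) set).
       real n > N \<longrightarrow> \<epsilon> > 0 \<longrightarrow> finite P \<longrightarrow> card P = n \<longrightarrow> P \<subseteq> unit_square \<longrightarrow>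
       (\<forall>p\<in>P. \<forall>q\<in>P. p \<noteq> q \<longrightarrow> dist p q \<ge> \<epsilon>) \<longrightarrow>
       real (card (Pi_ab \<alpha> \<beta> P)) \<le> C * real n powr (4/3) * (1/\<epsilon>) * ln (1/\<epsilon>))"
proof (rule exI[of _ "12546"], rule exI[of _ "100"], intro conjI allI impI)
  show "(12546::real) > 0" "(100::real) > 0" by simp_all
  fix n :: nat and \<epsilon> :: real and P :: "(real^2) set"
  assume n: "real n > 100" and "\<epsilon> > 0" "finite P" "card P = n" "P \<subseteq> unit_square"
    and sep: "\<forall>p\<in>P. \<forall>q\<in>P. p \<noteq> q \<longrightarrow> dist p q \<ge> \<epsilon>"
  define t where "t = 1 / \<epsilon>"
  have "t > 0" "\<epsilon> = 1 / t" using \<open>\<epsilon> > 0\<close> by (simp_all add: t_def)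
  with sep have sep_t: "\<forall>p\<in>P. \<forall>q\<in>P. p \<noteq> q \<longrightarrow> dist p q \<ge> 1 / t" by simp
  have "t \<ge> 3"
  proof (rule ccontr)
    assume "\<not> t \<ge> 3"
    hence "(2 * t + 1)\<^sup>2 < 7\<^sup>2" using \<open>t > 0\<close> by (intro power_strict_mono) auto
    with card_le_if_separated[OF \<open>t > 0\<close> \<open>finite P\<close> \<open>P \<subseteq> unit_square\<close> sep_t] n \<open>card P = n\<close>
    show False by simp
  qed
  hence "1 \<le> t * ln t" using one_le_ln_if_three_le mult_mono[of 1 t 1 "ln t"] by simp
  have "real (card (Pi_ab \<alpha> \<beta> P)) \<le> min (12546 * real n * (t * ln t) powr (4/3)) (2 * (real n)\<^sup>2)"
    using card_Pi_ab_le_powr[OF \<open>t \<ge> 3\<close> \<open>finite P\<close> \<open>P \<subseteq> unit_square\<close> assms sep_t]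
      card_Pi_ab_le_sq[OF \<open>finite P\<close> assms] \<open>card P = n\<close> by simp
  also have "\<dots> \<le> 12546 * real n powr (4/3) * (t * ln t)"
    using n \<open>1 \<le> t * ln t\<close> by (intro min_le_mult_powr_four_thirds) auto
  finally show "real (card (Pi_ab \<alpha> \<beta> P)) \<le> 12546 * real n powr (4/3) * (1 / \<epsilon>) * ln (1 / \<epsilon>)"
    by (simp add: t_def mult.assoc)
qed

end
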